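(* Consider the strategic usage dynamics described in the context, satisfying assumptions (A1)–(A4), with memory parameter $p\ge0$. For every time $t\ge 0$ and every user–service pair $(i,j)$ with $M^t_{ij}>0$, we have $\ell(h^{t+1}_j,x_i,y_i)=0$. Consequently, when $p>0$, if $A^t_{ij}>0$ for some time $t$, then $\ell(h^\tau_j,x_i,y_i)=0$ for all times $\tau>t$.
   Context: Setting. There are $n\ge 1$ users and $m\ge 1$ services. User $i\in\{1,\dots,n\}$ has fixed features $x_i\in\mathcal X$ and a fixed label $y_i\in\{+1,-1\}$. $\mathcal H$ is a set of classifiers $h:\mathcal X\to\{+1,-1\}$. There is a utility $u:\mathcal X\times\mathcal H\to\mathbb R$ (written $u(x,h)$) and a loss $\ell:\mathcal H\times\mathcal X\times\{+1,-1\}\to\mathbb R$ satisfying: (A1) for any $h_1,h_2\in\mathcal H$ and $x\in\mathcal X$ with $h_1(x)=-1$ and $h_2(x)=+1$, we have $u(x,h_1)\le 0<u(x,h_2)$; (A2) for all $h\in\mathcal H$ the loss is non-negative, $-y\,\ell(h,x,y)$ is strictly monotonically increasing with $u(x,h)$, and there exists $v>0$ such that $u(x,h)=0$ implies $\ell(h,x,y)=v$; (A3) (realizability) there is $h\in\mathcal H$ with $\ell(h,x_i,y_i)=0$ for all $i=1,\dots,n$. Dynamics. Fix $q>1$ and a memory parameter $p\ge 0$. A state at time $t$ is $(H^t,A^t)$ with $H^t=(h^t_1,\dots,h^t_m)\in\mathcal H^m$ and usage matrix $A^t\in\mathbb R_+^{n\times m}$. Given classifiers $H$, a user best response is any $A\in\arg\max_{A\in\mathbb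 R_+^{n\times m}}\sum_{i=1}^n\big[\sum_{j=1}^m A_{ij}u(x_i,h_j)-\frac1q(\sum_{j=1}^m A_{ij})^q\big]$ (any tie-breaking). Memory: $M^{-1}=0$ and $M^t=\frac{A^t}{1+p}+\frac{pM^{t-1}}{1+p}$ for $t\ge0$. For a memory matrix $M^t$ define $L^t(H)=\sum_{j=1}^m\sum_{i=1}^n\frac{M^t_{ij}}{\sum_{k=1}^n M^t_{kj}}\ell(h_j,x_i,y_i)$, with the fraction taken to be $0$ when $\sum_k M^t_{kj}=0$. The service update is sticky: $H^{t+1}\in\arg\min_{H\in\mathcal H^m}L^t(H)$, and whenever $L^{t-1}(H^t)=L^t(H^t)$ we have $H^{t+1}=H^t$. (A4) $H^0\in\mathcal H^m$ is arbitrary; for every $t\ge0$, $A^t$ is a user best response to $H^t$, and $H^{t+1}$ is obtained from $M^t$ by the sticky service update. *)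

theory Defs
  imports Complex_Main
begin

text \<open>Users are indexed by i < n, services by j < m. Classifiers are functions
  'x \<Rightarrow> int taking values in {1, -1}; labels are ints in {1, -1}.
  A usage matrix is a function nat \<Rightarrow> nat \<Rightarrow> real (only entries i < n, j < m matter);
  a tuple of classifiers H \<in> \<H>^m is a function nat \<Rightarrow> classifier (only j < m matters).\<close>

definition in_Hm :: "nat \<Rightarrow> ('x \<Rightarrow> int) set \<Rightarrow> (nat \<Rightarrow> ('x \<Rightarrow> int)) \<Rightarrow> bool" where
  "in_Hm m HS G \<longleftrightarrow> (\<forall>j<m. G j \<in> HS)"

definition nonneg_matrix :: "nat \<Rightarrow> nat \<Rightarrow> (nat \<Rightarrow> nat \<Rightarrow> real) \<Rightarrow> bool" where
  "nonneg_matrix n m B \<longleftrightarrow> (\<forall>i<n. \<forall>j<m. 0 \<le> B i j)"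

definition user_obj :: "nat \<Rightarrow> nat \<Rightarrow> real \<Rightarrow> ('x \<Rightarrow> ('x \<Rightarrow> int) \<Rightarrow> real) \<Rightarrow> (nat \<Rightarrow> 'x)
    \<Rightarrow> (nat \<Rightarrow> ('x \<Rightarrow> int)) \<Rightarrow> (nat \<Rightarrow> nat \<Rightarrow> real) \<Rightarrow> real" where
  "user_obj n m q u x G B =
     (\<Sum>i<n. (\<Sum>j<m. B i j * u (x i) (G j)) - (1 / q) * (\<Sum>j<m. B i j) powr q)"

definition user_best_response :: "nat \<Rightarrow> nat \<Rightarrow> real \<Rightarrow> ('x \<Rightarrow> ('x \<Rightarrow> int) \<Rightarrow> real)
    \<Rightarrow> (nat \<Rightarrow> 'x) \<Rightarrow> (nat \<Rightarrow> ('x \<Rightarrow> int)) \<Rightarrow> (nat \<Rightarrow> nat \<Rightarrow> real) \<Rightarrow> bool" where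
  "user_best_response n m q u x G B \<longleftrightarrow>
     nonneg_matrix n m B \<and>
     (\<forall>B'. nonneg_matrix n m B' \<longrightarrow> user_obj n m q u x G B' \<le> user_obj n m q u x G B)"

text \<open>Memory: M^{-1} = 0, M^t = A^t/(1+p) + p M^{t-1}/(1+p).
  memory p A t is M^t for t \<ge> 0.\<close>
fun memory :: "real \<Rightarrow> (nat \<Rightarrow> nat \<Rightarrow> nat \<Rightarrow> real) \<Rightarrow> nat \<Rightarrow> nat \<Rightarrow> nat \<Rightarrow> real" where
  "memory p A 0 i j = A 0 i j / (1 + p)"
| "memory p A (Suc t) i j = A (Suc t) i j / (1 + p) + p * memory p A t i j / (1 + p)"

definition memory_prev :: "real \<Rightarrow> (nat \<Rightarrow> nat \<Rightarrow> nat \<Rightarrow> real) \<Rightarrow> nat \<Rightarrow> nat \<Rightarrow> nat \<Rightarrow> real" where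
  "memory_prev p A t i j = (if t = 0 then 0 else memory p A (t - 1) i j)"

definition service_loss :: "nat \<Rightarrow> nat \<Rightarrow> (('x \<Rightarrow> int) \<Rightarrow> 'x \<Rightarrow> int \<Rightarrow> real) \<Rightarrow> (nat \<Rightarrow> 'x)
    \<Rightarrow> (nat \<Rightarrow> int) \<Rightarrow> (nat \<Rightarrow> nat \<Rightarrow> real) \<Rightarrow> (nat \<Rightarrow> ('x \<Rightarrow> int)) \<Rightarrow> real" where
  "service_loss n m loss x y M G =
     (\<Sum>j<m. \<Sum>i<n. (if (\<Sum>k<n. M k j) = 0 then 0 else M i j / (\<Sum>k<n. M k j))
                     * loss (G j) (x i) (y i))"

end

theory Submission
  imports Defs
begin

text \<open>A service tuple that uses a realizing classifier \<open>h\<close> everywhere has loss 0, so every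
  minimiser of the nonnegative service loss also has loss 0. As all weights are nonnegative,
  each term of the minimiser's loss vanishes, and a positive memory entry \<open>M\<^sup>t\<^sub>i\<^sub>j\<close> forces
  \<open>\<ell>(h\<^sup>t\<^sup>+\<^sup>1\<^sub>j, x\<^sub>i, y\<^sub>i) = 0\<close>. For \<open>p > 0\<close> the memory never forgets: once \<open>A\<^sup>t\<^sub>i\<^sub>j > 0\<close>, the entry
  \<open>M\<^sup>\<tau>\<^sub>i\<^sub>j\<close> stays positive for all \<open>\<tau> \<ge> t\<close>.\<close>

lemma memory_nonneg:
  assumes "\<And>t. 0 \<le> A t i j" and "0 \<le> p"
  shows "0 \<le> memory p A t i j"
  by (induction t) (use assms in auto)

lemma memory_pos_persists:
  assumes "\<And>t. 0 \<le> A t i j" and "0 < p" and "0 < A t i j" and "t \<le> \<tau>"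
  shows "0 < memory p A \<tau> i j"
  using \<open>t \<le> \<tau>\<close>
proof (induction \<tau> rule: dec_induct)
  case base
  have "0 \<le> memory p A (t - 1) i j"
    using assms(1,2) by (intro memory_nonneg) auto
  with assms(2,3) show ?case
    by (cases t) (auto intro: add_pos_nonneg)
next
  case (step \<tau>)
  have "0 \<le> A (Suc \<tau>) i j / (1 + p)"
    using assms(1,2) by simp
  moreover have "0 < p * memory p A \<tau> i j / (1 + p)"
    using step.IH assms(2) by simp
  ultimately show ?case
    by simp
qed

lemma service_loss_const_eq_0:
  assumes "\<forall>i<n. loss h (x i) (y i) = 0"
  shows "service_loss n m loss x y M (\<lambda>_. h) = 0"
  using assms unfolding service_loss_def by simp

lemma service_loss_nonpos_imp_loss_eq_0:
  assumes M_nonneg: "nonneg_matrix n m M"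
    and loss_nonneg: "\<forall>j<m. \<forall>i<n. 0 \<le> loss (G j) (x i) (y i)"
    and nonpos: "service_loss n m loss x y M G \<le> 0"
    and ij: "i < n" "j < m" and M_pos: "0 < M i j"
  shows "loss (G j) (x i) (y i) = 0"
proof -
  define w where "w j i = (if (\<Sum>k<n. M k j) = 0 then 0 else M i j / (\<Sum>k<n. M k j))" for j i
  let ?f = "\<lambda>j i. w j i * loss (G j) (x i) (y i)"
  have f_nonneg: "0 \<le> ?f j' i'" if "j' < m" "i' < n" for j' i'
  proof -
    have "0 \<le> w j' i'"
      using M_nonneg that unfolding w_def nonneg_matrix_def
      by (auto intro!: divide_nonneg_nonneg sum_nonneg)
    with loss_nonneg that show ?thesis
      by simp
  qed
  have "(\<Sum>j<m. \<Sum>i<n. ?f j i) = 0"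
    using nonpos f_nonneg unfolding service_loss_def w_def
    by (meson antisym lessThan_iff sum_nonneg)
  then have "(\<Sum>i<n. ?f j i) = 0"
    using f_nonneg ij by (subst (asm) sum_nonneg_eq_0_iff) (auto intro!: sum_nonneg)
  then have f_0: "?f j i = 0"
    using f_nonneg ij by (subst (asm) sum_nonneg_eq_0_iff) auto
  have "M i j \<le> (\<Sum>k<n. M k j)"
    using ij M_nonneg unfolding nonneg_matrix_def by (intro member_le_sum) auto
  then have "0 < w j i"
    using M_pos unfolding w_def by simp
  with f_0 show ?thesis
    by simp
qed

theorem lemma1:
  fixes n m :: nat
    and x :: "nat \<Rightarrow> 'x" and y :: "nat \<Rightarrow> int"
    and HS :: "('x \<Rightarrow> int) set"
    and u :: "'x \<Rightarrow> ('x \<Rightarrow> int) \<Rightarrow> real"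
    and loss :: "('x \<Rightarrow> int) \<Rightarrow> 'x \<Rightarrow> int \<Rightarrow> real"
    and q p :: real
    and Hs :: "nat \<Rightarrow> nat \<Rightarrow> ('x \<Rightarrow> int)"
    and A :: "nat \<Rightarrow> nat \<Rightarrow> nat \<Rightarrow> real"
  assumes n_pos: "n \<ge> 1" and m_pos: "m \<ge> 1"
    and labels: "\<forall>i<n. y i = 1 \<or> y i = -1"
    and classifiers: "\<forall>h\<in>HS. \<forall>z. h z = 1 \<or> h z = -1"
    and A1: "\<forall>h1\<in>HS. \<forall>h2\<in>HS. \<forall>z. h1 z = -1 \<and> h2 z = 1 \<longrightarrow> u z h1 \<le> 0 \<and> 0 < u z h2"
    and A2_nonneg: "\<forall>h\<in>HS. \<forall>z c. (c = 1 \<or> c = -1) \<longrightarrow> 0 \<le> loss h z c"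
    and A2_mono: "\<forall>h\<in>HS. \<forall>h'\<in>HS. \<forall>z c. (c = 1 \<or> c = -1) \<longrightarrow> u z h < u z h' \<longrightarrow>
                    - of_int c * loss h z c < - of_int c * loss h' z c"
    and A2_v: "\<exists>v>0. \<forall>h\<in>HS. \<forall>z c. (c = 1 \<or> c = -1) \<longrightarrow> u z h = 0 \<longrightarrow> loss h z c = v"
    and A3: "\<exists>h\<in>HS. \<forall>i<n. loss h (x i) (y i) = 0"
    and q_gt: "q > 1" and p_nonneg: "p \<ge> 0"
    and H0: "in_Hm m HS (Hs 0)"
    and best_resp: "\<forall>t. user_best_response n m q u x (Hs t) (A t)"
    and service_argmin: "\<forall>t. in_Hm m HS (Hs (Suc t)) \<and>
          (\<forall>G. in_Hm m HS G \<longrightarrow>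
             service_loss n m loss x y (memory p A t) (Hs (Suc t)) \<le> service_loss n m loss x y (memory p A t) G)"
    and sticky: "\<forall>t. service_loss n m loss x y (memory_prev p A t) (Hs t)
                     = service_loss n m loss x y (memory p A t) (Hs t)
                   \<longrightarrow> (\<forall>j<m. Hs (Suc t) j = Hs t j)"
  shows "(\<forall>t. \<forall>i<n. \<forall>j<m. memory p A t i j > 0 \<longrightarrow> loss (Hs (Suc t) j) (x i) (y i) = 0)
       \<and> (p > 0 \<longrightarrow> (\<forall>t. \<forall>i<n. \<forall>j<m. A t i j > 0 \<longrightarrow>
              (\<forall>\<tau>>t. loss (Hs \<tau> j) (x i) (y i) = 0)))"
proof -
  have A_nonneg: "0 \<le> A t i j" if "i < n" "j < m" for t i j
    using best_resp that unfolding user_best_response_def nonneg_matrix_def by blast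
  obtain h where h: "h \<in> HS" "\<forall>i<n. loss h (x i) (y i) = 0"
    using A3 by blast
  have supported_loss_0: "loss (Hs (Suc t) j) (x i) (y i) = 0"
    if ij: "i < n" "j < m" and "0 < memory p A t i j" for t i j
  proof -
    have "in_Hm m HS (\<lambda>_. h)"
      unfolding in_Hm_def using h(1) by simp
    moreover have "service_loss n m loss x y (memory p A t) (\<lambda>_. h) = 0"
      using h(2) by (rule service_loss_const_eq_0)
    ultimately have minimal: "service_loss n m loss x y (memory p A t) (Hs (Suc t)) \<le> 0"
      using service_argmin by metis
    have M_nonneg: "nonneg_matrix n m (memory p A t)"
      unfolding nonneg_matrix_def using A_nonneg p_nonneg by (blast intro: memory_nonneg)
    have loss_nonneg: "\<forall>j<m. \<forall>i<n. 0 \<le> loss (Hs (Suc t) j) (x i) (y i)"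
      using service_argmin A2_nonneg labels unfolding in_Hm_def by blast
    show ?thesis
      using M_nonneg loss_nonneg minimal ij \<open>0 < memory p A t i j\<close>
      by (rule service_loss_nonpos_imp_loss_eq_0)
  qed
  show ?thesis
  proof (intro conjI allI impI)
    fix t i j \<tau> assume "p > 0" and ij: "i < n" "j < m" and "A t i j > 0" and "\<tau> > t"
    then obtain \<tau>' where \<tau>: "\<tau> = Suc \<tau>'" "t \<le> \<tau>'"
      by (auto dest: less_imp_Suc_add)
    have "0 < memory p A \<tau>' i j"
      using A_nonneg[OF ij] \<open>p > 0\<close> \<open>A t i j > 0\<close> \<tau>(2) by (rule memory_pos_persists)
    with ij show "loss (Hs \<tau> j) (x i) (y i) = 0"
      unfolding \<tau>(1) by (rule supported_loss_0)
  qed (use supported_loss_0 in blast)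
qed

end
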